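(* Let $K$ be a field, $\boldsymbol{\lambda}=(\lambda_1,\dots,\lambda_n)$ a vector of positive integers, and $\Lambda=\langle 1/\lambda_1,\dots,1/\lambda_n\rangle$ the additive submonoid of $\mathbb{Q}_{\ge}$ generated by $1/\lambda_1,\dots,1/\lambda_n$. If $I(\boldsymbol{\lambda})\subseteq K[x_1,\dots,x_n]$ is normal, then $\Lambda$ is quasinormal.
   Context: $I(\boldsymbol{\lambda})$ is the integral closure in $K[x_1,\dots,x_n]$ of $(x_1^{\lambda_1},\dots,x_n^{\lambda_n})$; an ideal is normal if all its positive powers are integrally closed. A submonoid $S$ of the nonnegative rationals $\mathbb{Q}_{\ge}$ is quasinormal if whenever $x\in S$ and $x\ge p$ for a positive integer $p$, there exist $y_1,\dots,y_p\in S$ with $y_i\ge1$ for all $i$ and $x=y_1+\cdots+y_p$. *)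

theory Defs
  imports Complex_Main "HOL-Library.Poly_Mapping"
begin

(* The polynomial ring K[x_i : i in 'n] is modelled as
  ('n \<Rightarrow>\<^sub>0 nat) \<Rightarrow>\<^sub>0 'k (monomials = exponent vectors, finitely supported
  coefficient maps); 'n is a finite index type with CARD('n) = n. *)

definition ideal_gen :: "'a::comm_ring_1 set \<Rightarrow> 'a set" where
  "ideal_gen S = {x. \<exists>F c. finite F \<and> F \<subseteq> S \<and> x = (\<Sum>s\<in>F. c s * s)}"

definition ideal_pow :: "'a::comm_ring_1 set \<Rightarrow> nat \<Rightarrow> 'a set" where
  "ideal_pow I k = ideal_gen {prod_list xs | xs. length xs = k \<and> set xs \<subseteq> I}"

definition integral_closure_ideal :: "'a::comm_ring_1 set \<Rightarrow> 'a set" where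
  "integral_closure_ideal I = {r. \<exists>m\<ge>1. \<exists>a. (\<forall>i\<in>{1..m}. a i \<in> ideal_pow I i) \<and>
       r ^ m + (\<Sum>i=1..m. a i * r ^ (m - i)) = 0}"

definition integrally_closed_ideal :: "'a::comm_ring_1 set \<Rightarrow> bool" where
  "integrally_closed_ideal I \<longleftrightarrow> integral_closure_ideal I = I"

definition normal_ideal :: "'a::comm_ring_1 set \<Rightarrow> bool" where
  "normal_ideal I \<longleftrightarrow> (\<forall>k\<ge>1. integrally_closed_ideal (ideal_pow I k))"

definition var_pow :: "'n \<Rightarrow> nat \<Rightarrow> ('n \<Rightarrow>\<^sub>0 nat) \<Rightarrow>\<^sub>0 'k::field" where
  "var_pow i e = Poly_Mapping.single (Poly_Mapping.single i e) 1"

definition I_lam :: "('n::finite \<Rightarrow> nat) \<Rightarrow> (('n \<Rightarrow>\<^sub>0 nat) \<Rightarrow>\<^sub>0 'k::field) set" where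
  "I_lam lam = integral_closure_ideal (ideal_gen (range (\<lambda>i. var_pow i (lam i))))"

definition Lambda_mon :: "('n::finite \<Rightarrow> nat) \<Rightarrow> rat set" where
  "Lambda_mon lam = {(\<Sum>i\<in>UNIV. of_nat (c i) / of_nat (lam i)) | c. True}"

definition quasinormal :: "rat set \<Rightarrow> bool" where
  "quasinormal S \<longleftrightarrow> (\<forall>x\<in>S. \<forall>p::nat. p \<ge> 1 \<and> x \<ge> of_nat p \<longrightarrow>
      (\<exists>ys. length ys = p \<and> set ys \<subseteq> S \<and> (\<forall>y\<in>set ys. y \<ge> 1) \<and> x = sum_list ys))"

end

theory Submission
  imports Defs
begin

text \<open>Let \<open>L = \<Prod>i. \<lambda>\<^sub>i\<close> and give \<open>x\<^sup>a\<close> the weight \<open>\<Sum>i. a\<^sub>i / \<lambda>\<^sub>i\<close>,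
  so that \<open>\<Lambda>\<close> is the set of monomial weights. Every monomial occurring in an element
  of \<open>I(\<lambda>)\<close> has weight \<open>\<ge> 1\<close>: for a lowest-weight monomial of an element
  integral over \<open>(x\<^sub>1\<^sup>\<lambda>\<^sub>1, \<dots>, x\<^sub>n\<^sup>\<lambda>\<^sub>n)\<close>, compare coefficients in its
  equation of integral dependence. Now let \<open>w \<in> \<Lambda>\<close> with \<open>w \<ge> p\<close>, the weight of a
  monomial \<open>X\<close>. Then \<open>X\<^sup>L\<close> is a product of \<open>L\<cdot>w \<ge> L\<cdot>p\<close> generators
  \<open>x\<^sub>i\<^sup>\<lambda>\<^sub>i\<close>, hence lies in \<open>(I(\<lambda>)\<^sup>p)\<^sup>L\<close>; so \<open>X\<close> is integral over
  \<open>I(\<lambda>)\<^sup>p\<close>, and by normality \<open>X \<in> I(\<lambda>)\<^sup>p\<close>. Thus \<open>X\<close> is a multiple of a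
  product of \<open>p\<close> monomials of weight \<open>\<ge> 1\<close>, which splits \<open>w\<close> into \<open>p\<close>
  summands \<open>\<ge> 1\<close> in \<open>\<Lambda>\<close>.\<close>

lemma ideal_gen_zero: "0 \<in> ideal_gen S"
  unfolding ideal_gen_def by (rule CollectI, rule exI[of _ "{}"]) simp

lemma generator_mem_ideal_gen: "s \<in> S \<Longrightarrow> s \<in> ideal_gen S"
  unfolding ideal_gen_def by (rule CollectI, rule exI[of _ "{s}"], rule exI[of _ "\<lambda>_. 1"]) simp

lemma ideal_gen_mult_left:
  assumes "x \<in> ideal_gen S"
  shows "c * x \<in> ideal_gen S"
proof -
  obtain F d where "finite F" "F \<subseteq> S" "x = (\<Sum>s\<in>F. d s * s)"
    using assms unfolding ideal_gen_def by blast
  then show ?thesis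
    unfolding ideal_gen_def
    by (auto simp: sum_distrib_left mult.assoc intro!: exI[of _ F] exI[of _ "\<lambda>s. c * d s"])
qed

lemma prod_list_mem_ideal_pow:
  assumes "set xs \<subseteq> I" "p \<le> length xs"
  shows "prod_list xs \<in> ideal_pow I p"
proof -
  have "prod_list (take p xs) \<in> {prod_list ys | ys. length ys = p \<and> set ys \<subseteq> I}"
    using assms by (auto intro!: exI[of _ "take p xs"] dest: in_set_takeD)
  then have "prod_list (drop p xs) * prod_list (take p xs) \<in> ideal_pow I p"
    unfolding ideal_pow_def by (intro ideal_gen_mult_left generator_mem_ideal_gen)
  then show ?thesis
    by (metis append_take_drop_id mult.commute prod_list.append)
qed

lemma prod_list_regroup:
  assumes "set ys \<subseteq> I" "0 < k" "k * p \<le> length ys"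
  shows "\<exists>zs. length zs = k \<and> set zs \<subseteq> ideal_pow I p \<and> prod_list zs = prod_list ys"
  using assms(2,1,3)
proof (induction k arbitrary: ys rule: nat_induct_non_zero)
  case 1
  then show ?case by (intro exI[of _ "[prod_list ys]"]) (simp add: prod_list_mem_ideal_pow)
next
  case (Suc k)
  obtain zs where zs: "length zs = k" "set zs \<subseteq> ideal_pow I p"
    "prod_list zs = prod_list (drop p ys)"
    using Suc.IH[of "drop p ys"] Suc.prems by (force dest: in_set_dropD)
  have "prod_list (take p ys) \<in> ideal_pow I p"
    using Suc.prems by (intro prod_list_mem_ideal_pow) (auto dest: in_set_takeD)
  with zs show ?case
    by (intro exI[of _ "prod_list (take p ys) # zs"]) (auto simp flip: prod_list.append)
qed

lemma prod_list_mem_ideal_pow_ideal_pow: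
  assumes "set ys \<subseteq> I" "0 < k" "k * p \<le> length ys"
  shows "prod_list ys \<in> ideal_pow (ideal_pow I p) k"
proof -
  obtain zs where "length zs = k" "set zs \<subseteq> ideal_pow I p" "prod_list ys = prod_list zs"
    using prod_list_regroup[OF assms] by metis
  then show ?thesis
    unfolding ideal_pow_def[of "ideal_pow I p"] by (intro generator_mem_ideal_gen) blast
qed

lemma power_mem_integral_closure_ideal:
  assumes "0 < k" "x ^ k \<in> ideal_pow I k"
  shows "x \<in> integral_closure_ideal I"
proof -
  define a where "a i = (if i = k then - (x ^ k) else 0)" for i
  have "\<forall>i\<in>{1..k}. a i \<in> ideal_pow I i"
    using assms ideal_gen_mult_left[of "x ^ k" _ "- 1"]
    by (auto simp: a_def ideal_pow_def ideal_gen_zero)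
  moreover have "(\<Sum>i=1..k. a i * x ^ (k - i)) = (\<Sum>i=1..k. if i = k then - (x ^ k) else 0)"
    by (rule sum.cong) (auto simp: a_def)
  then have "x ^ k + (\<Sum>i=1..k. a i * x ^ (k - i)) = 0"
    using assms(1) by simp
  ultimately show ?thesis
    unfolding integral_closure_ideal_def using assms(1) by (intro CollectI exI conjI) auto
qed

lemma ideal_subset_integral_closure_ideal: "I \<subseteq> integral_closure_ideal I"
  using power_mem_integral_closure_ideal[of 1] prod_list_mem_ideal_pow[of "[_]"] by fastforce

lemma keys_ideal_gen_subset:
  fixes S :: "('a::comm_monoid_add \<Rightarrow>\<^sub>0 'b::comm_ring_1) set"
  assumes up: "\<And>a d. a \<in> V \<Longrightarrow> d + a \<in> V"
    and S: "\<And>s. s \<in> S \<Longrightarrow> Poly_Mapping.keys s \<subseteq> V"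
    and x: "x \<in> ideal_gen S"
  shows "Poly_Mapping.keys x \<subseteq> V"
proof -
  obtain F c where F: "F \<subseteq> S" and x_eq: "x = (\<Sum>s\<in>F. c s * s)"
    using x unfolding ideal_gen_def by blast
  have "Poly_Mapping.keys (c s * s) \<subseteq> V" if "s \<in> F" for s
    using keys_mult[of "c s" s] S[of s] F that up by blast
  then show ?thesis
    using keys_sum[of "\<lambda>s. c s * s" F] x_eq by blast
qed

lemma keys_prod_list_subset:
  fixes xs :: "('a::comm_monoid_add \<Rightarrow>\<^sub>0 'b::comm_ring_1) list"
  assumes U0: "0 \<in> U 0"
    and U_add: "\<And>a b j k. a \<in> U j \<Longrightarrow> b \<in> U k \<Longrightarrow> a + b \<in> U (j + k)"
    and xs: "\<And>x. x \<in> set xs \<Longrightarrow> Poly_Mapping.keys x \<subseteq> U 1"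
  shows "Poly_Mapping.keys (prod_list xs) \<subseteq> U (length xs)"
  using xs
proof (induction xs)
  case Nil
  then show ?case using U0 by simp
next
  case (Cons x xs)
  then show ?case
    using keys_mult[of x "prod_list xs"] U_add[of _ 1 _ "length xs"] by fastforce
qed

lemma keys_ideal_pow_subset:
  fixes I :: "('a::comm_monoid_add \<Rightarrow>\<^sub>0 'b::comm_ring_1) set"
  assumes U0: "0 \<in> U 0"
    and U_add: "\<And>a b j k. a \<in> U j \<Longrightarrow> b \<in> U k \<Longrightarrow> a + b \<in> U (j + k)"
    and up: "\<And>a d. a \<in> U p \<Longrightarrow> d + a \<in> U p"
    and I: "\<And>x. x \<in> I \<Longrightarrow> Poly_Mapping.keys x \<subseteq> U 1"
    and x: "x \<in> ideal_pow I p"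
  shows "Poly_Mapping.keys x \<subseteq> U p"
proof (rule keys_ideal_gen_subset[OF up])
  show "x \<in> ideal_gen {prod_list xs |xs. length xs = p \<and> set xs \<subseteq> I}"
    using x unfolding ideal_pow_def .
  fix s assume "s \<in> {prod_list xs |xs. length xs = p \<and> set xs \<subseteq> I}"
  then show "Poly_Mapping.keys s \<subseteq> U p"
    using keys_prod_list_subset[of U, OF U0 U_add] I by blast
qed

lemma lookup_mult_eq_zero:
  assumes "\<And>a b. a \<in> Poly_Mapping.keys f \<Longrightarrow> b \<in> Poly_Mapping.keys g \<Longrightarrow> a + b \<noteq> k"
  shows "Poly_Mapping.lookup (f * g) k = 0"
proof (rule ccontr)
  assume "Poly_Mapping.lookup (f * g) k \<noteq> 0"
  then have "k \<in> Poly_Mapping.keys (f * g)" by (simp add: in_keys_iff)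
  then obtain a b where "k = a + b" "a \<in> Poly_Mapping.keys f" "b \<in> Poly_Mapping.keys g"
    using keys_mult by blast
  with assms show False by blast
qed

lemma keys_ideal_pow_weight:
  fixes J :: "('a::comm_monoid_add \<Rightarrow>\<^sub>0 'b::comm_ring_1) set" and \<omega> :: "'a \<Rightarrow> nat"
  assumes \<omega>_add: "\<And>a b. \<omega> (a + b) = \<omega> a + \<omega> b"
    and J: "\<And>x k. x \<in> J \<Longrightarrow> k \<in> Poly_Mapping.keys x \<Longrightarrow> d \<le> \<omega> k"
    and x: "x \<in> ideal_pow J i" and k: "k \<in> Poly_Mapping.keys x"
  shows "i * d \<le> \<omega> k"
proof -
  have "Poly_Mapping.keys x \<subseteq> {k. i * d \<le> \<omega> k}"
    by (rule keys_ideal_pow_subset[OF _ _ _ _ x])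
      (use J in \<open>auto simp: \<omega>_add add_mult_distrib intro: add_mono\<close>)
  then show ?thesis using k by blast
qed

lemma keys_power_weight:
  fixes f :: "'a::comm_monoid_add \<Rightarrow>\<^sub>0 'b::comm_ring_1" and \<omega> :: "'a \<Rightarrow> nat"
  assumes \<omega>_add: "\<And>a b. \<omega> (a + b) = \<omega> a + \<omega> b"
    and f: "\<And>k. k \<in> Poly_Mapping.keys f \<Longrightarrow> c \<le> \<omega> k"
    and k: "k \<in> Poly_Mapping.keys (f ^ n)"
  shows "n * c \<le> \<omega> k"
proof -
  have "Poly_Mapping.keys (prod_list (replicate n f)) \<subseteq> {k. length (replicate n f) * c \<le> \<omega> k}"
    by (rule keys_prod_list_subset)
      (use f in \<open>auto simp: \<omega>_add add_mult_distrib intro: add_mono\<close>)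
  then show ?thesis using k by auto
qed

lemma lookup_mult_minimal_keys:
  fixes f g :: "'a::comm_monoid_add \<Rightarrow>\<^sub>0 'b::comm_ring_1"
    and \<kappa> :: "'a \<Rightarrow> 'c::linordered_cancel_ab_semigroup_add"
  assumes inj: "inj \<kappa>" and \<kappa>_add: "\<And>x y. \<kappa> (x + y) = \<kappa> x + \<kappa> y"
    and a: "\<And>x. x \<in> Poly_Mapping.keys f \<Longrightarrow> \<kappa> a \<le> \<kappa> x"
    and b: "\<And>y. y \<in> Poly_Mapping.keys g \<Longrightarrow> \<kappa> b \<le> \<kappa> y"
  shows "Poly_Mapping.lookup (f * g) (a + b) = Poly_Mapping.lookup f a * Poly_Mapping.lookup g b"
proof -
  define ca cb where "ca = Poly_Mapping.lookup f a" and "cb = Poly_Mapping.lookup g b"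
  define f' g' where "f' = f - Poly_Mapping.single a ca" and "g' = g - Poly_Mapping.single b cb"
  have strict: "\<kappa> c < \<kappa> x"
    if "x \<in> Poly_Mapping.keys (h - Poly_Mapping.single c (Poly_Mapping.lookup h c))"
      and "\<And>x. x \<in> Poly_Mapping.keys h \<Longrightarrow> \<kappa> c \<le> \<kappa> x"
    for h :: "'a \<Rightarrow>\<^sub>0 'b" and c x
  proof -
    have "x \<in> Poly_Mapping.keys h" "x \<noteq> c"
      using that(1) by (auto simp: in_keys_iff lookup_minus lookup_single when_def split: if_splits)
    then show ?thesis using that(2) inj by (metis injD order_le_neq_trans)
  qed
  have "f * g = Poly_Mapping.single (a + b) (ca * cb) + Poly_Mapping.single a ca * g' + f' * g"
    by (simp add: f'_def g'_def mult_single algebra_simps)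
  moreover have "Poly_Mapping.lookup (Poly_Mapping.single a ca * g') (a + b) = 0"
  proof (rule lookup_mult_eq_zero)
    fix x y assume "x \<in> Poly_Mapping.keys (Poly_Mapping.single a ca)" "y \<in> Poly_Mapping.keys g'"
    then have "x = a" "\<kappa> b < \<kappa> y"
      using strict[of y g b] b by (auto simp: g'_def cb_def split: if_splits)
    then show "x + y \<noteq> a + b" by (metis \<kappa>_add add_left_cancel less_irrefl)
  qed
  moreover have "Poly_Mapping.lookup (f' * g) (a + b) = 0"
  proof (rule lookup_mult_eq_zero)
    fix x y assume "x \<in> Poly_Mapping.keys f'" "y \<in> Poly_Mapping.keys g"
    then have "\<kappa> a + \<kappa> b < \<kappa> x + \<kappa> y"
      using strict[of x f a] a b by (intro add_less_le_mono) (auto simp: f'_def ca_def)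
    then show "x + y \<noteq> a + b" by (metis \<kappa>_add less_irrefl)
  qed
  ultimately show ?thesis by (simp add: lookup_add ca_def cb_def)
qed

lemma lookup_power_minimal_key:
  fixes f :: "'a::comm_monoid_add \<Rightarrow>\<^sub>0 'b::comm_ring_1"
    and \<kappa> :: "'a \<Rightarrow> 'c::linordered_cancel_ab_semigroup_add"
  assumes inj: "inj \<kappa>" and \<kappa>_add: "\<And>x y. \<kappa> (x + y) = \<kappa> x + \<kappa> y"
    and a: "\<And>x. x \<in> Poly_Mapping.keys f \<Longrightarrow> \<kappa> a \<le> \<kappa> x"
  shows "Poly_Mapping.lookup (f ^ m) (sum_list (replicate m a)) = Poly_Mapping.lookup f a ^ m
    \<and> (\<forall>x\<in>Poly_Mapping.keys (f ^ m). \<kappa> (sum_list (replicate m a)) \<le> \<kappa> x)"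
proof (induction m)
  case 0
  then show ?case by simp
next
  case (Suc m)
  define A where "A = sum_list (replicate m a)"
  have IH: "Poly_Mapping.lookup (f ^ m) A = Poly_Mapping.lookup f a ^ m"
    "\<And>y. y \<in> Poly_Mapping.keys (f ^ m) \<Longrightarrow> \<kappa> A \<le> \<kappa> y"
    using Suc.IH by (auto simp: A_def)
  have "\<kappa> (a + A) \<le> \<kappa> z" if "z \<in> Poly_Mapping.keys (f * f ^ m)" for z
    using keys_mult[of f "f ^ m"] that a IH(2) by (force simp: \<kappa>_add intro: add_mono)
  then show ?case
    using lookup_mult_minimal_keys[of \<kappa> f a "f ^ m" A, OF inj \<kappa>_add a IH(2)] IH(1)
    by (simp add: A_def)
qed

text \<open>The order on \<open>nat \<Rightarrow>\<^sub>0 nat\<close> is lexicographic, so storing \<open>\<omega> a\<close> in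
  coordinate \<open>0\<close> makes \<open>\<omega>\<close> the leading criterion.\<close>

lemma ex_inj_additive_refinement:
  fixes \<omega> :: "('n::finite \<Rightarrow>\<^sub>0 nat) \<Rightarrow> nat"
  assumes \<omega>_add: "\<And>a b. \<omega> (a + b) = \<omega> a + \<omega> b"
  obtains \<kappa> :: "('n \<Rightarrow>\<^sub>0 nat) \<Rightarrow> (nat \<Rightarrow>\<^sub>0 nat)"
  where "inj \<kappa>" "\<And>a b. \<kappa> (a + b) = \<kappa> a + \<kappa> b"
    "\<And>a b. \<omega> a < \<omega> b \<Longrightarrow> \<kappa> a < \<kappa> b"
proof -
  obtain e :: "'n \<Rightarrow> nat" where e: "inj e"
    using finite_imp_inj_to_nat_seg[of "UNIV :: 'n set"] by auto
  define \<kappa> where "\<kappa> a = Poly_Mapping.single 0 (\<omega> a) +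
      (\<Sum>i\<in>UNIV. Poly_Mapping.single (Suc (e i)) (Poly_Mapping.lookup a i))" for a
  have lookup_0: "Poly_Mapping.lookup (\<kappa> a) 0 = \<omega> a" for a
    by (simp add: \<kappa>_def lookup_add lookup_sum lookup_single)
  have lookup_Suc: "Poly_Mapping.lookup (\<kappa> a) (Suc (e j)) = Poly_Mapping.lookup a j" for a j
  proof -
    have "Poly_Mapping.lookup (\<kappa> a) (Suc (e j)) =
        (\<Sum>i\<in>UNIV. Poly_Mapping.lookup a i when i = j)"
      by (simp add: \<kappa>_def lookup_add lookup_sum lookup_single e inj_eq)
    then show ?thesis by (simp add: when_def)
  qed
  show ?thesis
  proof
    show "inj \<kappa>"
      by (rule injI, rule poly_mapping_eqI) (metis lookup_Suc)
    show "\<kappa> (a + b) = \<kappa> a + \<kappa> b" for a b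
      by (simp add: \<kappa>_def \<omega>_add single_add lookup_add sum.distrib algebra_simps)
    show "\<kappa> a < \<kappa> b" if "\<omega> a < \<omega> b" for a b
      unfolding less_poly_mapping.rep_eq less_fun_def
      by (rule exI[of _ 0]) (simp add: lookup_0 that)
  qed
qed

lemma ex_min_weight_key_lookup_power_nonzero:
  fixes \<omega> :: "('n::finite \<Rightarrow>\<^sub>0 nat) \<Rightarrow> nat" and r :: "('n \<Rightarrow>\<^sub>0 nat) \<Rightarrow>\<^sub>0 'k::idom"
  assumes \<omega>_add: "\<And>a b. \<omega> (a + b) = \<omega> a + \<omega> b" and "r \<noteq> 0"
  obtains a0 where "a0 \<in> Poly_Mapping.keys r"
    "\<And>x. x \<in> Poly_Mapping.keys r \<Longrightarrow> \<omega> a0 \<le> \<omega> x"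
    "\<And>M. Poly_Mapping.lookup (r ^ M) (sum_list (replicate M a0)) \<noteq> 0"
proof -
  obtain \<kappa> :: "('n \<Rightarrow>\<^sub>0 nat) \<Rightarrow> (nat \<Rightarrow>\<^sub>0 nat)" where inj: "inj \<kappa>"
    and \<kappa>_add: "\<And>a b. \<kappa> (a + b) = \<kappa> a + \<kappa> b"
    and refines: "\<And>a b. \<omega> a < \<omega> b \<Longrightarrow> \<kappa> a < \<kappa> b"
    using ex_inj_additive_refinement[OF \<omega>_add] by blast
  have "Poly_Mapping.keys r \<noteq> {}" using \<open>r \<noteq> 0\<close> by simp
  then obtain a0 where a0: "a0 \<in> Poly_Mapping.keys r"
    and \<kappa>_min: "\<And>x. x \<in> Poly_Mapping.keys r \<Longrightarrow> \<kappa> a0 \<le> \<kappa> x"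
    using arg_min_if_finite[of "Poly_Mapping.keys r" \<kappa>] by (metis finite_keys not_le)
  show ?thesis
  proof
    show "a0 \<in> Poly_Mapping.keys r" by (fact a0)
    show "\<omega> a0 \<le> \<omega> x" if "x \<in> Poly_Mapping.keys r" for x
      using refines[of x a0] \<kappa>_min[OF that] by (meson leD leI)
    show "Poly_Mapping.lookup (r ^ M) (sum_list (replicate M a0)) \<noteq> 0" for M
      using lookup_power_minimal_key[where f = r and m = M, OF inj \<kappa>_add \<kappa>_min] a0
      by (simp add: in_keys_iff)
  qed
qed

text \<open>The coefficient of \<open>M\<cdot>a0\<close> in the equation of integral dependence comes from
  \<open>r ^ M\<close> alone: every other term has weight at least
  \<open>i\<cdot>d + (M - i)\<cdot>\<omega> a0 > M\<cdot>\<omega> a0\<close>.\<close>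

lemma keys_integral_closure_ideal_weight:
  fixes \<omega> :: "('n::finite \<Rightarrow>\<^sub>0 nat) \<Rightarrow> nat" and J :: "(('n \<Rightarrow>\<^sub>0 nat) \<Rightarrow>\<^sub>0 'k::idom) set"
  assumes \<omega>_add: "\<And>a b. \<omega> (a + b) = \<omega> a + \<omega> b"
    and J: "\<And>x k. x \<in> J \<Longrightarrow> k \<in> Poly_Mapping.keys x \<Longrightarrow> d \<le> \<omega> k"
    and r: "r \<in> integral_closure_ideal J" and k: "k \<in> Poly_Mapping.keys r"
  shows "d \<le> \<omega> k"
proof (rule ccontr)
  assume "\<not> d \<le> \<omega> k"
  obtain M a where a: "\<forall>i\<in>{1..M}. a i \<in> ideal_pow J i"
    and eq: "r ^ M + (\<Sum>i=1..M. a i * r ^ (M - i)) = 0"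
    using r unfolding integral_closure_ideal_def by blast
  have "r \<noteq> 0" using k by auto
  then obtain a0 where \<omega>_min: "\<And>x. x \<in> Poly_Mapping.keys r \<Longrightarrow> \<omega> a0 \<le> \<omega> x"
    and nonzero: "Poly_Mapping.lookup (r ^ M) (sum_list (replicate M a0)) \<noteq> 0"
    using ex_min_weight_key_lookup_power_nonzero[OF \<omega>_add] by metis
  with k \<open>\<not> d \<le> \<omega> k\<close> have low: "\<omega> a0 < d" by fastforce
  define A where "A = sum_list (replicate M a0)"
  have "\<omega> 0 = 0" using \<omega>_add[of 0 0] by simp
  then have \<omega>_A: "\<omega> A = M * \<omega> a0"
    unfolding A_def by (induction M) (simp_all add: \<omega>_add)
  have "Poly_Mapping.lookup (a i * r ^ (M - i)) A = 0" if i: "i \<in> {1..M}" for i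
  proof (rule lookup_mult_eq_zero)
    fix x y assume x: "x \<in> Poly_Mapping.keys (a i)" and y: "y \<in> Poly_Mapping.keys (r ^ (M - i))"
    have "a i \<in> ideal_pow J i" using a i by blast
    with \<omega>_add J have "i * d \<le> \<omega> x"
      using x by (rule keys_ideal_pow_weight)
    moreover have "(M - i) * \<omega> a0 \<le> \<omega> y"
      using \<omega>_add \<omega>_min y by (rule keys_power_weight)
    moreover have "M * \<omega> a0 = i * \<omega> a0 + (M - i) * \<omega> a0" and "i * \<omega> a0 < i * d"
      using i low by (simp_all flip: add_mult_distrib)
    ultimately have "\<omega> A < \<omega> (x + y)"
      unfolding \<omega>_A \<omega>_add by linarith
    then show "x + y \<noteq> A" by blast
  qed
  then show False
    using arg_cong[OF eq, of "\<lambda>p. Poly_Mapping.lookup p A"] nonzero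
    by (simp add: A_def lookup_add lookup_sum)
qed

definition sum_of_ge_one :: "'a::{ordered_comm_monoid_add,one} set \<Rightarrow> nat \<Rightarrow> 'a \<Rightarrow> bool" where
  "sum_of_ge_one S p x \<longleftrightarrow>
    (\<exists>ys. length ys = p \<and> set ys \<subseteq> S \<and> (\<forall>y\<in>set ys. 1 \<le> y) \<and> x = sum_list ys)"

lemma sum_of_ge_one_0: "sum_of_ge_one S 0 0"
  unfolding sum_of_ge_one_def by simp

lemma sum_of_ge_one_1: "x \<in> S \<Longrightarrow> 1 \<le> x \<Longrightarrow> sum_of_ge_one S 1 x"
  unfolding sum_of_ge_one_def by (intro exI[of _ "[x]"]) simp

lemma sum_of_ge_one_add:
  assumes "sum_of_ge_one S j x" "sum_of_ge_one S k y"
  shows "sum_of_ge_one S (j + k) (x + y)"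
proof -
  obtain xs ys where "length xs = j" "set xs \<subseteq> S" "\<forall>z\<in>set xs. 1 \<le> z" "x = sum_list xs"
    "length ys = k" "set ys \<subseteq> S" "\<forall>z\<in>set ys. 1 \<le> z" "y = sum_list ys"
    using assms unfolding sum_of_ge_one_def by blast
  then show ?thesis
    unfolding sum_of_ge_one_def by (intro exI[of _ "xs @ ys"]) auto
qed

lemma sum_of_ge_one_add_left:
  assumes x: "sum_of_ge_one S p x" and "0 < p"
    and S_add: "\<And>a b. a \<in> S \<Longrightarrow> b \<in> S \<Longrightarrow> a + b \<in> S" and d: "d \<in> S" "0 \<le> d"
  shows "sum_of_ge_one S p (d + x)"
proof -
  obtain y ys where "length (y # ys) = p" "set (y # ys) \<subseteq> S" "\<forall>z\<in>set (y # ys). 1 \<le> z"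
    "x = sum_list (y # ys)"
    using x \<open>0 < p\<close> unfolding sum_of_ge_one_def by (metis length_greater_0_conv neq_Nil_conv)
  then show ?thesis
    unfolding sum_of_ge_one_def using S_add d
    by (intro exI[of _ "(d + y) # ys"]) (auto simp: add.assoc intro: add_increasing)
qed

definition monomial_weight :: "('n::finite \<Rightarrow> nat) \<Rightarrow> ('n \<Rightarrow>\<^sub>0 nat) \<Rightarrow> nat" where
  "monomial_weight w a = (\<Sum>i\<in>UNIV. Poly_Mapping.lookup a i * w i)"

definition lambda_weight :: "('n::finite \<Rightarrow> nat) \<Rightarrow> ('n \<Rightarrow>\<^sub>0 nat) \<Rightarrow> rat" where
  "lambda_weight lam a = (\<Sum>i\<in>UNIV. of_nat (Poly_Mapping.lookup a i) / of_nat (lam i))"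

lemma monomial_weight_add: "monomial_weight w (a + b) = monomial_weight w a + monomial_weight w b"
  by (simp add: monomial_weight_def lookup_add algebra_simps sum.distrib)

lemma monomial_weight_single: "monomial_weight w (Poly_Mapping.single i n) = n * w i"
proof -
  have "monomial_weight w (Poly_Mapping.single i n) = (\<Sum>j\<in>UNIV. if j = i then n * w i else 0)"
    unfolding monomial_weight_def by (intro sum.cong) (auto simp: lookup_single)
  then show ?thesis by simp
qed

lemma lambda_weight_add: "lambda_weight lam (a + b) = lambda_weight lam a + lambda_weight lam b"
  by (simp add: lambda_weight_def lookup_add add_divide_distrib sum.distrib)

lemma lambda_weight_nonneg: "0 \<le> lambda_weight lam a"
  unfolding lambda_weight_def by (intro sum_nonneg) simp

lemma Lambda_mon_eq_range: "Lambda_mon lam = range (lambda_weight lam)"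
proof (intro equalityI subsetI)
  fix x assume "x \<in> Lambda_mon lam"
  then obtain c where "x = (\<Sum>i\<in>UNIV. of_nat (c i) / of_nat (lam i))"
    unfolding Lambda_mon_def by blast
  then have "x = lambda_weight lam (Abs_poly_mapping c)"
    by (simp add: lambda_weight_def)
  then show "x \<in> range (lambda_weight lam)" by simp
next
  fix x assume "x \<in> range (lambda_weight lam)"
  then show "x \<in> Lambda_mon lam"
    unfolding Lambda_mon_def lambda_weight_def by blast
qed

lemma lambda_weight_mem_Lambda_mon: "lambda_weight lam a \<in> Lambda_mon lam"
  by (simp add: Lambda_mon_eq_range)

lemma Lambda_mon_add: "x \<in> Lambda_mon lam \<Longrightarrow> y \<in> Lambda_mon lam \<Longrightarrow> x + y \<in> Lambda_mon lam"
  by (auto simp: Lambda_mon_eq_range simp flip: lambda_weight_add)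

lemma of_nat_monomial_weight:
  "of_nat (monomial_weight (\<lambda>i. prod lam UNIV div lam i) a)
    = of_nat (prod lam UNIV) * lambda_weight lam a"
  by (simp add: monomial_weight_def lambda_weight_def sum_distrib_left
      of_nat_of_nat_div[OF dvd_prodI] mult.commute del: of_nat_prod)

lemma single_power:
  "Poly_Mapping.single a (c::'b::comm_semiring_1) ^ n = Poly_Mapping.single (\<Sum>_<n. a) (c ^ n)"
  by (induction n) (simp_all add: mult_single add.commute)

lemma prod_single:
  "finite A \<Longrightarrow> (\<Prod>i\<in>A. Poly_Mapping.single (h i) (c i :: 'b::comm_semiring_1))
    = Poly_Mapping.single (\<Sum>i\<in>A. h i) (\<Prod>i\<in>A. c i)"
  by (induction A rule: finite_induct) (simp_all add: mult_single)

lemma prod_power_eq_prod_list: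
  assumes "finite A"
  shows "\<exists>ys. set ys \<subseteq> g ` A \<and> length ys = (\<Sum>i\<in>A. n i)
    \<and> prod_list ys = (\<Prod>i\<in>A. g i ^ n i)"
  using assms
proof (induction A rule: finite_induct)
  case empty
  then show ?case by simp
next
  case (insert i A)
  then obtain ys where "set ys \<subseteq> g ` A" "length ys = (\<Sum>i\<in>A. n i)"
    "prod_list ys = (\<Prod>i\<in>A. g i ^ n i)"
    by blast
  with insert.hyps show ?case
    by (intro exI[of _ "replicate (n i) (g i) @ ys"]) auto
qed

lemma monomial_power_eq_prod_var_pow:
  "(Poly_Mapping.single m 1 :: ('n::finite \<Rightarrow>\<^sub>0 nat) \<Rightarrow>\<^sub>0 'k::field) ^ prod lam UNIV
    = (\<Prod>i\<in>UNIV. var_pow i (lam i) ^ (Poly_Mapping.lookup m i * (prod lam UNIV div lam i)))"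
proof -
  let ?L = "prod lam UNIV"
  let ?e = "\<Sum>i\<in>UNIV. \<Sum>_<Poly_Mapping.lookup m i * (?L div lam i). Poly_Mapping.single i (lam i)"
  have "Poly_Mapping.lookup (\<Sum>_<?L. m) j = Poly_Mapping.lookup ?e j" for j
  proof -
    have "lam j dvd ?L" by (simp add: dvd_prodI)
    then show ?thesis
      by (simp add: lookup_sum lookup_single mult_when, simp add: when_def)
  qed
  then have "(\<Sum>_<?L. m) = ?e"
    by (rule poly_mapping_eqI)
  then show ?thesis
    unfolding var_pow_def single_power by (simp add: prod_single)
qed

lemma var_pow_mem_I_lam: "var_pow i (lam i) \<in> I_lam lam"
  unfolding I_lam_def
  by (rule subsetD[OF ideal_subset_integral_closure_ideal generator_mem_ideal_gen]) simp

lemma keys_I_lam: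
  fixes lam :: "'n::finite \<Rightarrow> nat"
  assumes pos: "\<forall>i. 0 < lam i"
    and r: "r \<in> (I_lam lam :: (('n \<Rightarrow>\<^sub>0 nat) \<Rightarrow>\<^sub>0 'k::field) set)"
    and k: "k \<in> Poly_Mapping.keys r"
  shows "1 \<le> lambda_weight lam k"
proof -
  let ?L = "prod lam UNIV"
  let ?\<omega> = "monomial_weight (\<lambda>i. ?L div lam i)"
  have J: "?L \<le> ?\<omega> k'"
    if "x \<in> ideal_gen (range (\<lambda>i. var_pow i (lam i)))" "k' \<in> Poly_Mapping.keys x"
    for x :: "('n \<Rightarrow>\<^sub>0 nat) \<Rightarrow>\<^sub>0 'k" and k'
  proof -
    have "Poly_Mapping.keys x \<subseteq> {a. ?L \<le> ?\<omega> a}"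
      by (rule keys_ideal_gen_subset[OF _ _ that(1)])
        (auto simp: monomial_weight_add var_pow_def monomial_weight_single dvd_prodI)
    with that(2) show ?thesis by blast
  qed
  have "?L \<le> ?\<omega> k"
    using monomial_weight_add J r[unfolded I_lam_def] k by (rule keys_integral_closure_ideal_weight)
  then have "of_nat ?L * 1 \<le> (of_nat ?L * lambda_weight lam k :: rat)"
    unfolding of_nat_monomial_weight[symmetric] by (simp del: of_nat_prod)
  moreover have "0 < ?L" using pos by (simp add: prod_pos)
  ultimately show ?thesis by (simp only: mult_le_cancel_left_pos of_nat_0_less_iff)
qed

lemma keys_ideal_pow_I_lam:
  fixes lam :: "'n::finite \<Rightarrow> nat"
  assumes pos: "\<forall>i. 0 < lam i" and "0 < p"
    and x: "x \<in> ideal_pow (I_lam lam :: (('n \<Rightarrow>\<^sub>0 nat) \<Rightarrow>\<^sub>0 'k::field) set) p"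
    and k: "k \<in> Poly_Mapping.keys x"
  shows "sum_of_ge_one (Lambda_mon lam) p (lambda_weight lam k)"
proof -
  let ?U = "\<lambda>j. {a. sum_of_ge_one (Lambda_mon lam) j (lambda_weight lam a)}"
  have "Poly_Mapping.keys x \<subseteq> ?U p"
  proof (rule keys_ideal_pow_subset[OF _ _ _ _ x])
    show "0 \<in> ?U 0" by (simp add: lambda_weight_def sum_of_ge_one_0)
    show "a + b \<in> ?U (j + k)" if "a \<in> ?U j" "b \<in> ?U k" for a b j k
      using that by (simp add: lambda_weight_add sum_of_ge_one_add)
    show "d + a \<in> ?U p" if "a \<in> ?U p" for a d
    proof -
      from that have "sum_of_ge_one (Lambda_mon lam) p (lambda_weight lam a)" by simp
      then have "sum_of_ge_one (Lambda_mon lam) p (lambda_weight lam d + lambda_weight lam a)"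
        using \<open>0 < p\<close> Lambda_mon_add lambda_weight_mem_Lambda_mon lambda_weight_nonneg
        by (rule sum_of_ge_one_add_left)
      then show ?thesis by (simp add: lambda_weight_add)
    qed
    show "Poly_Mapping.keys y \<subseteq> ?U 1" if "y \<in> I_lam lam" for y
      using keys_I_lam[OF pos that] sum_of_ge_one_1[OF lambda_weight_mem_Lambda_mon] by blast
  qed
  then show ?thesis using k by blast
qed

lemma monomial_mem_integral_closure_ideal_pow:
  fixes lam :: "'n::finite \<Rightarrow> nat"
  assumes pos: "\<forall>i. 0 < lam i" and p: "of_nat p \<le> lambda_weight lam m"
  shows "(Poly_Mapping.single m 1 :: ('n \<Rightarrow>\<^sub>0 nat) \<Rightarrow>\<^sub>0 'k::field)
    \<in> integral_closure_ideal (ideal_pow (I_lam lam) p)"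
proof -
  let ?L = "prod lam UNIV"
  let ?n = "\<lambda>i. Poly_Mapping.lookup m i * (?L div lam i)"
  have L: "0 < ?L" using pos by (simp add: prod_pos)
  obtain ys where ys: "set ys \<subseteq> range (\<lambda>i. var_pow i (lam i))" "length ys = (\<Sum>i\<in>UNIV. ?n i)"
    "prod_list ys = (\<Prod>i\<in>UNIV. (var_pow i (lam i) :: ('n \<Rightarrow>\<^sub>0 nat) \<Rightarrow>\<^sub>0 'k) ^ ?n i)"
    using prod_power_eq_prod_list[OF finite_UNIV, of "\<lambda>i. var_pow i (lam i)" ?n] by blast
  have "of_nat (?L * p) \<le> (of_nat (monomial_weight (\<lambda>i. ?L div lam i) m) :: rat)"
    using p L by (simp add: of_nat_monomial_weight del: of_nat_prod)
  then have "?L * p \<le> length ys"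
    unfolding of_nat_le_iff ys(2) monomial_weight_def .
  then have "prod_list ys \<in> ideal_pow (ideal_pow (I_lam lam) p) ?L"
    using ys(1) L var_pow_mem_I_lam by (intro prod_list_mem_ideal_pow_ideal_pow) auto
  then show ?thesis
    using L ys(3)
    by (intro power_mem_integral_closure_ideal[where k = ?L])
      (simp_all add: monomial_power_eq_prod_var_pow)
qed

theorem lemma4p6:
  fixes lam :: "'n::finite \<Rightarrow> nat"
  assumes "\<forall>i. lam i > 0"
    and "normal_ideal (I_lam lam :: (('n \<Rightarrow>\<^sub>0 nat) \<Rightarrow>\<^sub>0 'k::field) set)"
  shows "quasinormal (Lambda_mon lam)"
proof -
  let ?I = "I_lam lam :: (('n \<Rightarrow>\<^sub>0 nat) \<Rightarrow>\<^sub>0 'k) set"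
  have "sum_of_ge_one (Lambda_mon lam) p x"
    if x: "x \<in> Lambda_mon lam" and p: "1 \<le> p" "of_nat p \<le> x" for x p
  proof -
    obtain m where m: "x = lambda_weight lam m"
      using x by (auto simp: Lambda_mon_eq_range)
    let ?X = "Poly_Mapping.single m 1 :: ('n \<Rightarrow>\<^sub>0 nat) \<Rightarrow>\<^sub>0 'k"
    have "?X \<in> integral_closure_ideal (ideal_pow ?I p)"
      using monomial_mem_integral_closure_ideal_pow assms(1) p(2) m by blast
    then have "?X \<in> ideal_pow ?I p"
      using assms(2) p(1) unfolding normal_ideal_def integrally_closed_ideal_def by blast
    then show ?thesis
      unfolding m by (rule keys_ideal_pow_I_lam[OF assms(1), rotated]) (use p(1) in auto)
  qed
  then show ?thesis
    unfolding quasinormal_def sum_of_ge_one_def by blast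
qed

end
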